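(* Let $G,H$ be finite groups and $f:G\to H$ an identity preserving function such that $[G,G;f]$ is abelian and $n=[G:\mathrm{Stab}_G(f)]$ is relatively prime to $|[G,G;f]|$. Let $a_1,\dots,a_n$ be representatives of the right cosets of $\mathrm{Stab}_G(f)$ in $G$ and let $m$ be an integer with $mn\equiv 1\pmod{|[G,G;f]|}$. Then the distributed average $$\overline{\overline f}(x)=f(x)\Bigl(\prod_{i=1}^n[a_i,x;f]\Bigr)^m$$ is a group homomorphism from $G$ to $H$.
   Context: For $f:G\to H$ and $a\in G$, $f^a(x)=f(a)^{-1}f(ax)$; $f$ is identity preserving if $f(1)=1$. $\mathrm{Stab}_G(f)=\{a\in G: f^a=f\}$ (a subgroup of $G$). The $f$-distributor is $[x,y;f]=f(y)^{-1}f(x)^{-1}f(xy)=f(y)^{-1}f^x(y)$, and $[G,G;f]=\langle [x,y;f]: x,y\in G\rangle$. *)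

theory Defs
  imports "HOL-Algebra.Algebra"
begin

definition distributor :: "('a, 'c) monoid_scheme \<Rightarrow> ('b, 'd) monoid_scheme \<Rightarrow> ('a \<Rightarrow> 'b) \<Rightarrow> 'a \<Rightarrow> 'a \<Rightarrow> 'b" where
  "distributor G H f x y = inv\<^bsub>H\<^esub> (f y) \<otimes>\<^bsub>H\<^esub> inv\<^bsub>H\<^esub> (f x) \<otimes>\<^bsub>H\<^esub> f (x \<otimes>\<^bsub>G\<^esub> y)"

definition distributor_subgroup :: "('a, 'c) monoid_scheme \<Rightarrow> ('b, 'd) monoid_scheme \<Rightarrow> ('a \<Rightarrow> 'b) \<Rightarrow> 'b set" where
  "distributor_subgroup G H f =
     generate H {distributor G H f x y | x y. x \<in> carrier G \<and> y \<in> carrier G}"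

definition shifted :: "('a, 'c) monoid_scheme \<Rightarrow> ('b, 'd) monoid_scheme \<Rightarrow> ('a \<Rightarrow> 'b) \<Rightarrow> 'a \<Rightarrow> 'a \<Rightarrow> 'b" where
  "shifted G H f a x = inv\<^bsub>H\<^esub> (f a) \<otimes>\<^bsub>H\<^esub> f (a \<otimes>\<^bsub>G\<^esub> x)"

definition stab :: "('a, 'c) monoid_scheme \<Rightarrow> ('b, 'd) monoid_scheme \<Rightarrow> ('a \<Rightarrow> 'b) \<Rightarrow> 'a set" where
  "stab G H f = {a \<in> carrier G. \<forall>x \<in> carrier G. shifted G H f a x = f x}"

definition listprod :: "('b, 'd) monoid_scheme \<Rightarrow> 'b list \<Rightarrow> 'b" where
  "listprod H xs = foldr (\<lambda>u v. u \<otimes>\<^bsub>H\<^esub> v) xs \<one>\<^bsub>H\<^esub>"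

end

theory Submission
  imports Defs
begin

text \<open>
  The distributor satisfies the cocycle identity
  \<open>f(y)\<inverse> [b,x;f] f(y) \<cdot> [bx,y;f] = [x,y;f] \<cdot> [b,xy;f]\<close>, and \<open>[b,y;f]\<close> only depends on
  the coset \<open>Stab(f) b\<close>. Multiplying the identity over \<open>b = a\<^sub>1, \<dots>, a\<^sub>n\<close> inside the abelian
  group \<open>[G,G;f]\<close>, and using that right multiplication by \<open>x\<close> permutes the cosets, gives
  \<open>f(y)\<inverse> P(x) f(y) \<cdot> P(y) = [x,y;f]\<^sup>n \<cdot> P(xy)\<close> for \<open>P(x) = \<Prod>\<^sub>i [a\<^sub>i,x;f]\<close>.
  Raising this to the power \<open>m\<close> turns \<open>[x,y;f]\<^sup>n\<close> into \<open>[x,y;f]\<close>, and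
  \<open>f(x) f(y) [x,y;f] = f(xy)\<close> then yields multiplicativity of \<open>f(x) P(x)\<^sup>m\<close>.
\<close>

lemma (in group) mult_inv_cancel_left [simp]:
  "x \<in> carrier G \<Longrightarrow> y \<in> carrier G \<Longrightarrow> x \<otimes> (inv x \<otimes> y) = y"
  by (simp add: m_assoc[symmetric])

lemma (in group) inv_mult_cancel_left [simp]:
  "x \<in> carrier G \<Longrightarrow> y \<in> carrier G \<Longrightarrow> inv x \<otimes> (x \<otimes> y) = y"
  by (simp add: m_assoc[symmetric])

lemma (in group) inv_conj_hom: "c \<in> carrier G \<Longrightarrow> (\<lambda>u. inv c \<otimes> u \<otimes> c) \<in> hom G G"
  by (rule homI) (auto simp: m_assoc)

lemma (in group) int_pow_eq_self_if_mod_order: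
  assumes x: "x \<in> carrier G" and k: "k mod int (order G) = 1 mod int (order G)"
  shows "x [^] k = x"
proof -
  have "int (ord x) dvd int (order G)"
    using ord_dvd_group_order[OF x] by simp
  also have "int (order G) dvd 1 - k"
    using k by (metis mod_eq_dvd_iff)
  finally have "x [^] k = x [^] (1::int)"
    using int_pow_eq[OF x] by simp
  then show ?thesis using x by simp
qed

lemma (in group) int_pow_eq_self_if_mod_card_subgroup:
  assumes A: "subgroup A G" and x: "x \<in> A" and k: "k mod int (card A) = 1 mod int (card A)"
  shows "x [^] k = x"
proof -
  interpret A: group "G\<lparr>carrier := A\<rparr>" using subgroup_imp_group[OF A] .
  have "x [^]\<^bsub>G\<lparr>carrier := A\<rparr>\<^esub> k = x"
    using A.int_pow_eq_self_if_mod_order[of x k] x k by (simp add: order_def)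
  then show ?thesis using int_pow_consistent[OF A x] by simp
qed

lemma (in group) rcosets_mult_right_bij:
  assumes S: "subgroup S G" and x: "x \<in> carrier G"
  shows "bij_betw (\<lambda>C. C #> x) (rcosets S) (rcosets S)"
proof (rule bij_betw_byWitness[where f' = "\<lambda>C. C #> inv x"])
  have translate: "C #> y \<in> rcosets S" if "C \<in> rcosets S" "y \<in> carrier G" for C y
    using that subgroup.subset[OF S] by (auto simp: RCOSETS_def coset_mult_assoc intro: rcosetsI)
  show "\<forall>C \<in> rcosets S. C #> x #> inv x = C" "\<forall>C \<in> rcosets S. C #> inv x #> x = C"
    using x subgroup.rcosets_carrier[OF S] by (auto simp: coset_mult_assoc)
  show "(\<lambda>C. C #> x) ` (rcosets S) \<subseteq> rcosets S" "(\<lambda>C. C #> inv x) ` (rcosets S) \<subseteq> rcosets S"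
    using translate x by auto
qed

lemma (in group) rcoset_representatives_mult_right:
  assumes S: "subgroup S G" and a: "a ` I \<subseteq> carrier G"
    and bij: "bij_betw (\<lambda>i. S #> a i) I (rcosets S)" and x: "x \<in> carrier G"
  obtains \<sigma> where "bij_betw \<sigma> I I" and "\<And>i. i \<in> I \<Longrightarrow> a i \<otimes> x \<in> S #> a (\<sigma> i)"
proof
  define c where "c = (\<lambda>i. S #> a i)"
  define \<sigma> where "\<sigma> = the_inv_into I c \<circ> (\<lambda>C. C #> x) \<circ> c"
  have c: "bij_betw c I (rcosets S)" using bij unfolding c_def .
  show "bij_betw \<sigma> I I"
    unfolding \<sigma>_def
    using c rcosets_mult_right_bij[OF S x] bij_betw_the_inv_into[OF c]
    by (blast intro: bij_betw_trans)
  fix i assume i: "i \<in> I"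
  have ai: "a i \<in> carrier G" using a i by auto
  have "c i #> x \<in> rcosets S"
    using c rcosets_mult_right_bij[OF S x] i unfolding bij_betw_def by auto
  then have "c (\<sigma> i) = c i #> x"
    unfolding \<sigma>_def using f_the_inv_into_f_bij_betw[OF c] by simp
  also have "\<dots> = S #> (a i \<otimes> x)"
    unfolding c_def using ai x subgroup.subset[OF S] by (simp add: coset_mult_assoc)
  finally show "a i \<otimes> x \<in> S #> a (\<sigma> i)"
    using rcos_self[OF _ S] ai x unfolding c_def by simp
qed

lemma listprod_Nil [simp]: "listprod M [] = \<one>\<^bsub>M\<^esub>"
  by (simp add: listprod_def)

lemma listprod_Cons [simp]: "listprod M (u # xs) = u \<otimes>\<^bsub>M\<^esub> listprod M xs"
  by (simp add: listprod_def)

lemma (in monoid) listprod_closed: "set xs \<subseteq> carrier G \<Longrightarrow> listprod G xs \<in> carrier G"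
  by (induct xs) auto

lemma (in group_hom) hom_listprod:
  "set xs \<subseteq> carrier G \<Longrightarrow> h (listprod G xs) = listprod H (map h xs)"
  by (induct xs) (auto simp: G.listprod_closed)

lemma listprod_eq_finprod:
  assumes "comm_monoid (M\<lparr>carrier := A\<rparr>)" and "distinct xs" and "g ` set xs \<subseteq> A"
  shows "listprod M (map g xs) = finprod (M\<lparr>carrier := A\<rparr>) g (set xs)"
  using assms(2,3)
proof (induction xs)
  case Nil
  show ?case using comm_monoid.finprod_empty[OF assms(1), of g] by simp
next
  case (Cons x xs)
  have "finprod (M\<lparr>carrier := A\<rparr>) g (insert x (set xs))
      = g x \<otimes>\<^bsub>M\<lparr>carrier := A\<rparr>\<^esub> finprod (M\<lparr>carrier := A\<rparr>) g (set xs)"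
    using Cons.prems by (intro comm_monoid.finprod_insert[OF assms(1)]) auto
  then show ?case using Cons by simp
qed

locale identity_preserving_map = G: group G + H: group H
  for G :: "('a, 'c) monoid_scheme" and H :: "('b, 'd) monoid_scheme" +
  fixes f :: "'a \<Rightarrow> 'b"
  assumes f_closed: "f \<in> carrier G \<rightarrow> carrier H"
    and f_one: "f \<one>\<^bsub>G\<^esub> = \<one>\<^bsub>H\<^esub>"
begin

abbreviation "D \<equiv> distributor G H f"
abbreviation "S \<equiv> stab G H f"
abbreviation "A \<equiv> distributor_subgroup G H f"

lemma f_in_carrier [simp]: "x \<in> carrier G \<Longrightarrow> f x \<in> carrier H"
  using f_closed by auto

lemma stab_iff:
  "s \<in> S \<longleftrightarrow> s \<in> carrier G \<and> (\<forall>x \<in> carrier G. f (s \<otimes>\<^bsub>G\<^esub> x) = f s \<otimes>\<^bsub>H\<^esub> f x)"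
proof -
  have "inv\<^bsub>H\<^esub> (f s) \<otimes>\<^bsub>H\<^esub> f (s \<otimes>\<^bsub>G\<^esub> x) = f x \<longleftrightarrow> f (s \<otimes>\<^bsub>G\<^esub> x) = f s \<otimes>\<^bsub>H\<^esub> f x"
    if "s \<in> carrier G" "x \<in> carrier G" for x
    using H.inv_solve_left[of "f x" "f s" "f (s \<otimes>\<^bsub>G\<^esub> x)"] that by auto
  then show ?thesis unfolding stab_def shifted_def by auto
qed

lemma stab_mult: "s \<in> S \<Longrightarrow> x \<in> carrier G \<Longrightarrow> f (s \<otimes>\<^bsub>G\<^esub> x) = f s \<otimes>\<^bsub>H\<^esub> f x"
  using stab_iff by blast

lemma subgroup_stab: "subgroup S G"
proof (rule G.subgroupI)
  show "S \<subseteq> carrier G" using stab_iff by blast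
  show "S \<noteq> {}" using stab_iff[of "\<one>\<^bsub>G\<^esub>"] f_one by auto
next
  fix s assume s: "s \<in> S"
  then have sG: "s \<in> carrier G" using stab_iff by blast
  have "f s \<otimes>\<^bsub>H\<^esub> f (inv\<^bsub>G\<^esub> s) = \<one>\<^bsub>H\<^esub>"
    using stab_mult[OF s, of "inv\<^bsub>G\<^esub> s"] sG f_one by simp
  then have f_inv: "f (inv\<^bsub>G\<^esub> s) = inv\<^bsub>H\<^esub> (f s)"
    using H.inv_equality[OF H.inv_comm] sG by simp
  have "f (inv\<^bsub>G\<^esub> s \<otimes>\<^bsub>G\<^esub> x) = f (inv\<^bsub>G\<^esub> s) \<otimes>\<^bsub>H\<^esub> f x" if x: "x \<in> carrier G" for x
    using stab_mult[OF s, of "inv\<^bsub>G\<^esub> s \<otimes>\<^bsub>G\<^esub> x"] f_inv sG x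
    by (simp add: G.m_assoc[symmetric])
  then show "inv\<^bsub>G\<^esub> s \<in> S" using stab_iff sG by simp
next
  fix s t assume "s \<in> S" "t \<in> S"
  then show "s \<otimes>\<^bsub>G\<^esub> t \<in> S"
    using stab_iff by (simp add: G.m_assoc H.m_assoc)
qed

lemma distributor_closed [simp]: "x \<in> carrier G \<Longrightarrow> y \<in> carrier G \<Longrightarrow> D x y \<in> carrier H"
  by (simp add: distributor_def)

lemma subgroup_distributor_subgroup: "subgroup A H"
  unfolding distributor_subgroup_def by (rule H.generate_is_subgroup) auto

lemma distributor_subgroup_carrier: "u \<in> A \<Longrightarrow> u \<in> carrier H"
  using subgroup.mem_carrier[OF subgroup_distributor_subgroup] .

lemma distributor_in_subgroup [simp]: "x \<in> carrier G \<Longrightarrow> y \<in> carrier G \<Longrightarrow> D x y \<in> A"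
  unfolding distributor_subgroup_def by (rule generate.incl) auto

lemma f_mult_distributor:
  "x \<in> carrier G \<Longrightarrow> y \<in> carrier G \<Longrightarrow> f x \<otimes>\<^bsub>H\<^esub> (f y \<otimes>\<^bsub>H\<^esub> D x y) = f (x \<otimes>\<^bsub>G\<^esub> y)"
  by (simp add: distributor_def H.m_assoc[symmetric])

lemma distributor_stab_mult_left:
  "s \<in> S \<Longrightarrow> b \<in> carrier G \<Longrightarrow> y \<in> carrier G \<Longrightarrow> D (s \<otimes>\<^bsub>G\<^esub> b) y = D b y"
  using stab_iff[of s] unfolding distributor_def
  by (simp add: stab_mult G.m_assoc H.inv_mult_group H.m_assoc)

lemma distributor_cocycle:
  assumes "b \<in> carrier G" "x \<in> carrier G" "y \<in> carrier G"
  shows "inv\<^bsub>H\<^esub> (f y) \<otimes>\<^bsub>H\<^esub> D b x \<otimes>\<^bsub>H\<^esub> f y \<otimes>\<^bsub>H\<^esub> D (b \<otimes>\<^bsub>G\<^esub> x) y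
    = D x y \<otimes>\<^bsub>H\<^esub> D b (x \<otimes>\<^bsub>G\<^esub> y)"
  using assms unfolding distributor_def by (simp add: G.m_assoc H.m_assoc)

lemma conj_distributor_in_subgroup:
  assumes b: "b \<in> carrier G" and x: "x \<in> carrier G" and y: "y \<in> carrier G"
  shows "inv\<^bsub>H\<^esub> (f y) \<otimes>\<^bsub>H\<^esub> D b x \<otimes>\<^bsub>H\<^esub> f y \<in> A"
proof -
  have "inv\<^bsub>H\<^esub> (f y) \<otimes>\<^bsub>H\<^esub> D b x \<otimes>\<^bsub>H\<^esub> f y
      = D x y \<otimes>\<^bsub>H\<^esub> D b (x \<otimes>\<^bsub>G\<^esub> y) \<otimes>\<^bsub>H\<^esub> inv\<^bsub>H\<^esub> D (b \<otimes>\<^bsub>G\<^esub> x) y"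
    using distributor_cocycle[OF assms, symmetric] assms by (simp add: H.m_assoc)
  then show ?thesis
    using subgroup_distributor_subgroup assms by (simp add: subgroup.m_closed subgroup.m_inv_closed)
qed

end

locale distributed_average = identity_preserving_map +
  fixes a :: "nat \<Rightarrow> 'a" and n :: nat
  assumes distributor_subgroup_comm: "comm_group (H\<lparr>carrier := distributor_subgroup G H f\<rparr>)"
    and representatives_closed: "a ` {1..n} \<subseteq> carrier G"
    and representatives_bij: "bij_betw (\<lambda>i. stab G H f #>\<^bsub>G\<^esub> a i) {1..n} (rcosets\<^bsub>G\<^esub> (stab G H f))"
begin

sublocale K: comm_group "H\<lparr>carrier := A\<rparr>"
  by (rule distributor_subgroup_comm)

definition distributor_product where
  "distributor_product x = listprod H (map (\<lambda>i. D (a i) x) [1..<Suc n])"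

lemma representative_closed [simp]: "1 \<le> i \<Longrightarrow> i \<le> n \<Longrightarrow> a i \<in> carrier G"
  using representatives_closed by auto

lemma listprod_eq_finprod_distributor_subgroup:
  "(\<And>i. i \<in> {1..n} \<Longrightarrow> g i \<in> A) \<Longrightarrow>
    listprod H (map g [1..<Suc n]) = finprod (H\<lparr>carrier := A\<rparr>) g {1..n}"
proof -
  assume g: "\<And>i. i \<in> {1..n} \<Longrightarrow> g i \<in> A"
  have "listprod H (map g [1..<Suc n]) = finprod (H\<lparr>carrier := A\<rparr>) g (set [1..<Suc n])"
    by (rule listprod_eq_finprod[OF K.comm_monoid_axioms]) (use g in auto)
  also have "set [1..<Suc n] = {1..n}" by auto
  finally show ?thesis .
qed

lemma distributor_product_eq_finprod:
  "x \<in> carrier G \<Longrightarrow> distributor_product x = finprod (H\<lparr>carrier := A\<rparr>) (\<lambda>i. D (a i) x) {1..n}"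
  unfolding distributor_product_def by (rule listprod_eq_finprod_distributor_subgroup) simp

lemma distributor_product_closed: "x \<in> carrier G \<Longrightarrow> distributor_product x \<in> A"
  using K.finprod_closed[of "\<lambda>i. D (a i) x" "{1..n}"] by (simp add: distributor_product_eq_finprod)

lemma finprod_distributor_mult_right:
  assumes x: "x \<in> carrier G" and y: "y \<in> carrier G"
  shows "finprod (H\<lparr>carrier := A\<rparr>) (\<lambda>i. D (a i \<otimes>\<^bsub>G\<^esub> x) y) {1..n} = distributor_product y"
proof -
  obtain \<sigma> where \<sigma>: "bij_betw \<sigma> {1..n} {1..n}"
    and coset: "\<And>i. i \<in> {1..n} \<Longrightarrow> a i \<otimes>\<^bsub>G\<^esub> x \<in> S #>\<^bsub>G\<^esub> a (\<sigma> i)"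
    using G.rcoset_representatives_mult_right[OF subgroup_stab representatives_closed
        representatives_bij x] by blast
  have \<sigma>_in: "\<sigma> i \<in> {1..n}" if "i \<in> {1..n}" for i
    using \<sigma> that by (auto simp: bij_betw_def)
  have "D (a i \<otimes>\<^bsub>G\<^esub> x) y = D (a (\<sigma> i)) y" if i: "i \<in> {1..n}" for i
  proof -
    obtain s where s: "s \<in> S" and "a i \<otimes>\<^bsub>G\<^esub> x = s \<otimes>\<^bsub>G\<^esub> a (\<sigma> i)"
      using coset[OF i] unfolding r_coset_def by auto
    then show ?thesis
      using distributor_stab_mult_left[OF s _ y] \<sigma>_in[OF i] by simp
  qed
  then have "finprod (H\<lparr>carrier := A\<rparr>) (\<lambda>i. D (a i \<otimes>\<^bsub>G\<^esub> x) y) {1..n}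
      = finprod (H\<lparr>carrier := A\<rparr>) (\<lambda>i. D (a (\<sigma> i)) y) {1..n}"
    using \<sigma>_in y by (intro K.finprod_cong) auto
  also have "\<dots> = finprod (H\<lparr>carrier := A\<rparr>) (\<lambda>i. D (a i) y) (\<sigma> ` {1..n})"
    using \<sigma> y by (intro K.finprod_reindex[symmetric]) (auto simp: bij_betw_def)
  also have "\<dots> = distributor_product y"
    using \<sigma> y by (simp add: bij_betw_def distributor_product_eq_finprod)
  finally show ?thesis .
qed

lemma distributor_subgroup_mult_comm: "u \<in> A \<Longrightarrow> v \<in> A \<Longrightarrow> u \<otimes>\<^bsub>H\<^esub> v = v \<otimes>\<^bsub>H\<^esub> u"
  using K.m_comm by simp

lemma conj_distributor_product:
  assumes x: "x \<in> carrier G" and y: "y \<in> carrier G"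
  shows "inv\<^bsub>H\<^esub> (f y) \<otimes>\<^bsub>H\<^esub> distributor_product x \<otimes>\<^bsub>H\<^esub> f y
    = finprod (H\<lparr>carrier := A\<rparr>) (\<lambda>i. inv\<^bsub>H\<^esub> (f y) \<otimes>\<^bsub>H\<^esub> D (a i) x \<otimes>\<^bsub>H\<^esub> f y) {1..n}"
proof -
  interpret conj: group_hom H H "\<lambda>u. inv\<^bsub>H\<^esub> (f y) \<otimes>\<^bsub>H\<^esub> u \<otimes>\<^bsub>H\<^esub> f y"
    using H.inv_conj_hom y by (simp add: group_hom_def group_hom_axioms_def H.is_group)
  have "inv\<^bsub>H\<^esub> (f y) \<otimes>\<^bsub>H\<^esub> distributor_product x \<otimes>\<^bsub>H\<^esub> f y
      = listprod H (map (\<lambda>i. inv\<^bsub>H\<^esub> (f y) \<otimes>\<^bsub>H\<^esub> D (a i) x \<otimes>\<^bsub>H\<^esub> f y) [1..<Suc n])"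
    unfolding distributor_product_def using x by (subst conj.hom_listprod) (auto simp: comp_def)
  also have "\<dots> = finprod (H\<lparr>carrier := A\<rparr>) (\<lambda>i. inv\<^bsub>H\<^esub> (f y) \<otimes>\<^bsub>H\<^esub> D (a i) x \<otimes>\<^bsub>H\<^esub> f y) {1..n}"
    by (rule listprod_eq_finprod_distributor_subgroup) (simp add: conj_distributor_in_subgroup x y)
  finally show ?thesis .
qed

lemma conj_distributor_product_closed:
  "x \<in> carrier G \<Longrightarrow> y \<in> carrier G \<Longrightarrow> inv\<^bsub>H\<^esub> (f y) \<otimes>\<^bsub>H\<^esub> distributor_product x \<otimes>\<^bsub>H\<^esub> f y \<in> A"
  by (simp add: conj_distributor_product)
    (rule K.finprod_closed[simplified], simp add: conj_distributor_in_subgroup)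

lemma conj_distributor_product_mult:
  assumes x: "x \<in> carrier G" and y: "y \<in> carrier G"
  shows "inv\<^bsub>H\<^esub> (f y) \<otimes>\<^bsub>H\<^esub> distributor_product x \<otimes>\<^bsub>H\<^esub> f y \<otimes>\<^bsub>H\<^esub> distributor_product y
    = D x y [^]\<^bsub>H\<^esub> n \<otimes>\<^bsub>H\<^esub> distributor_product (x \<otimes>\<^bsub>G\<^esub> y)"
proof -
  let ?K = "H\<lparr>carrier := A\<rparr>"
  have "inv\<^bsub>H\<^esub> (f y) \<otimes>\<^bsub>H\<^esub> distributor_product x \<otimes>\<^bsub>H\<^esub> f y \<otimes>\<^bsub>H\<^esub> distributor_product y
      = finprod ?K (\<lambda>i. inv\<^bsub>H\<^esub> (f y) \<otimes>\<^bsub>H\<^esub> D (a i) x \<otimes>\<^bsub>H\<^esub> f y) {1..n}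
        \<otimes>\<^bsub>?K\<^esub> finprod ?K (\<lambda>i. D (a i \<otimes>\<^bsub>G\<^esub> x) y) {1..n}"
    by (simp only: conj_distributor_product[OF x y] finprod_distributor_mult_right[OF x y]) simp
  also have "\<dots> = finprod ?K (\<lambda>i. inv\<^bsub>H\<^esub> (f y) \<otimes>\<^bsub>H\<^esub> D (a i) x \<otimes>\<^bsub>H\<^esub> f y \<otimes>\<^bsub>?K\<^esub> D (a i \<otimes>\<^bsub>G\<^esub> x) y) {1..n}"
    by (rule K.finprod_multf[symmetric]) (auto simp: conj_distributor_in_subgroup x y)
  also have "\<dots> = finprod ?K (\<lambda>i. D x y \<otimes>\<^bsub>?K\<^esub> D (a i) (x \<otimes>\<^bsub>G\<^esub> y)) {1..n}"
    by (rule K.finprod_cong)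
      (simp_all add: distributor_cocycle x y subgroup.m_closed[OF subgroup_distributor_subgroup])
  also have "\<dots> = finprod ?K (\<lambda>i. D x y) {1..n} \<otimes>\<^bsub>?K\<^esub> finprod ?K (\<lambda>i. D (a i) (x \<otimes>\<^bsub>G\<^esub> y)) {1..n}"
    by (rule K.finprod_multf) (auto simp: x y)
  also have "finprod ?K (\<lambda>i. D x y) {1..n} = D x y [^]\<^bsub>H\<^esub> n"
    using K.finprod_const[of "D x y" "{1..n}"] x y by (simp flip: H.nat_pow_consistent)
  also have "finprod ?K (\<lambda>i. D (a i) (x \<otimes>\<^bsub>G\<^esub> y)) {1..n} = distributor_product (x \<otimes>\<^bsub>G\<^esub> y)"
    using x y by (simp add: distributor_product_eq_finprod)
  finally show ?thesis by simp
qed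

lemma distributor_product_pow_mult:
  assumes x: "x \<in> carrier G" and y: "y \<in> carrier G"
    and m: "(m * int n) mod int (card A) = 1 mod int (card A)"
  shows "(inv\<^bsub>H\<^esub> (f y) \<otimes>\<^bsub>H\<^esub> distributor_product x \<otimes>\<^bsub>H\<^esub> f y) [^]\<^bsub>H\<^esub> m
      \<otimes>\<^bsub>H\<^esub> distributor_product y [^]\<^bsub>H\<^esub> m
    = D x y \<otimes>\<^bsub>H\<^esub> distributor_product (x \<otimes>\<^bsub>G\<^esub> y) [^]\<^bsub>H\<^esub> m"
proof -
  let ?c = "inv\<^bsub>H\<^esub> (f y) \<otimes>\<^bsub>H\<^esub> distributor_product x \<otimes>\<^bsub>H\<^esub> f y"
  have in_A: "?c \<in> A" "distributor_product y \<in> A" "distributor_product (x \<otimes>\<^bsub>G\<^esub> y) \<in> A"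
      "D x y [^]\<^bsub>H\<^esub> int n \<in> A"
    using conj_distributor_product_closed distributor_product_closed
      H.subgroup_int_pow_closed[OF subgroup_distributor_subgroup]
    by (simp_all add: x y)
  have "?c [^]\<^bsub>H\<^esub> m \<otimes>\<^bsub>H\<^esub> distributor_product y [^]\<^bsub>H\<^esub> m
      = (?c \<otimes>\<^bsub>H\<^esub> distributor_product y) [^]\<^bsub>H\<^esub> m"
    using H.int_pow_mult_distrib[OF distributor_subgroup_mult_comm[OF in_A(1,2)]]
      in_A distributor_subgroup_carrier
    by simp
  also have "\<dots> = (D x y [^]\<^bsub>H\<^esub> int n \<otimes>\<^bsub>H\<^esub> distributor_product (x \<otimes>\<^bsub>G\<^esub> y)) [^]\<^bsub>H\<^esub> m"
    by (simp add: conj_distributor_product_mult x y int_pow_int)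
  also have "\<dots> = D x y [^]\<^bsub>H\<^esub> (int n * m) \<otimes>\<^bsub>H\<^esub> distributor_product (x \<otimes>\<^bsub>G\<^esub> y) [^]\<^bsub>H\<^esub> m"
    using H.int_pow_mult_distrib[OF distributor_subgroup_mult_comm[OF in_A(4,3)]]
      in_A distributor_subgroup_carrier x y
    by (simp add: H.int_pow_pow)
  also have "D x y [^]\<^bsub>H\<^esub> (int n * m) = D x y"
    using m x y
    by (intro H.int_pow_eq_self_if_mod_card_subgroup[OF subgroup_distributor_subgroup])
      (simp_all add: mult.commute)
  finally show ?thesis .
qed

lemma distributed_average_hom:
  assumes m: "(m * int n) mod int (card A) = 1 mod int (card A)"
  shows "(\<lambda>x. f x \<otimes>\<^bsub>H\<^esub> distributor_product x [^]\<^bsub>H\<^esub> m) \<in> hom G H"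
proof (rule homI)
  fix x assume x: "x \<in> carrier G"
  show "f x \<otimes>\<^bsub>H\<^esub> distributor_product x [^]\<^bsub>H\<^esub> m \<in> carrier H"
    using x distributor_subgroup_carrier distributor_product_closed by simp
  fix y assume y: "y \<in> carrier G"
  let ?P = distributor_product and ?c = "inv\<^bsub>H\<^esub> (f y) \<otimes>\<^bsub>H\<^esub> distributor_product x \<otimes>\<^bsub>H\<^esub> f y"
  have P: "?P x \<in> carrier H" "?P y \<in> carrier H" "?c \<in> carrier H"
    using x y distributor_subgroup_carrier distributor_product_closed conj_distributor_product_closed by auto
  have "?P x [^]\<^bsub>H\<^esub> m \<otimes>\<^bsub>H\<^esub> f y
      = f y \<otimes>\<^bsub>H\<^esub> (inv\<^bsub>H\<^esub> (f y) \<otimes>\<^bsub>H\<^esub> ?P x [^]\<^bsub>H\<^esub> m \<otimes>\<^bsub>H\<^esub> f y)"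
    using y P by (simp add: H.m_assoc)
  also have "\<dots> = f y \<otimes>\<^bsub>H\<^esub> ?c [^]\<^bsub>H\<^esub> m"
    using hom_int_pow[OF H.inv_conj_hom[of "f y"] P(1) H.is_group H.is_group, of m] y by simp
  finally have conj: "?P x [^]\<^bsub>H\<^esub> m \<otimes>\<^bsub>H\<^esub> f y = f y \<otimes>\<^bsub>H\<^esub> ?c [^]\<^bsub>H\<^esub> m" .
  have "f x \<otimes>\<^bsub>H\<^esub> ?P x [^]\<^bsub>H\<^esub> m \<otimes>\<^bsub>H\<^esub> (f y \<otimes>\<^bsub>H\<^esub> ?P y [^]\<^bsub>H\<^esub> m)
      = f x \<otimes>\<^bsub>H\<^esub> (?P x [^]\<^bsub>H\<^esub> m \<otimes>\<^bsub>H\<^esub> f y) \<otimes>\<^bsub>H\<^esub> ?P y [^]\<^bsub>H\<^esub> m"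
    using x y P by (simp add: H.m_assoc)
  also have "\<dots> = f x \<otimes>\<^bsub>H\<^esub> (f y \<otimes>\<^bsub>H\<^esub> (?c [^]\<^bsub>H\<^esub> m \<otimes>\<^bsub>H\<^esub> ?P y [^]\<^bsub>H\<^esub> m))"
    unfolding conj using x y P by (simp add: H.m_assoc)
  also have "\<dots> = f x \<otimes>\<^bsub>H\<^esub> (f y \<otimes>\<^bsub>H\<^esub> D x y) \<otimes>\<^bsub>H\<^esub> ?P (x \<otimes>\<^bsub>G\<^esub> y) [^]\<^bsub>H\<^esub> m"
    unfolding distributor_product_pow_mult[OF x y m]
    using x y distributor_subgroup_carrier distributor_product_closed by (simp add: H.m_assoc)
  also have "\<dots> = f (x \<otimes>\<^bsub>G\<^esub> y) \<otimes>\<^bsub>H\<^esub> ?P (x \<otimes>\<^bsub>G\<^esub> y) [^]\<^bsub>H\<^esub> m"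
    by (simp add: f_mult_distributor x y)
  finally show "f (x \<otimes>\<^bsub>G\<^esub> y) \<otimes>\<^bsub>H\<^esub> ?P (x \<otimes>\<^bsub>G\<^esub> y) [^]\<^bsub>H\<^esub> m
      = f x \<otimes>\<^bsub>H\<^esub> ?P x [^]\<^bsub>H\<^esub> m \<otimes>\<^bsub>H\<^esub> (f y \<otimes>\<^bsub>H\<^esub> ?P y [^]\<^bsub>H\<^esub> m)" ..
qed

end

theorem mainTheorem12:
  fixes G :: "('a, 'c) monoid_scheme" and H :: "('b, 'd) monoid_scheme"
    and f :: "'a \<Rightarrow> 'b" and a :: "nat \<Rightarrow> 'a" and n :: nat and m :: int
  assumes "group G" and "group H"
    and "finite (carrier G)" and "finite (carrier H)"
    and "f \<in> carrier G \<rightarrow> carrier H"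
    and "f \<one>\<^bsub>G\<^esub> = \<one>\<^bsub>H\<^esub>"
    and "comm_group (H\<lparr>carrier := distributor_subgroup G H f\<rparr>)"
    and "n = card (rcosets\<^bsub>G\<^esub> (stab G H f))"
    and "coprime n (card (distributor_subgroup G H f))"
    and "a ` {1..n} \<subseteq> carrier G"
    and "bij_betw (\<lambda>i. stab G H f #>\<^bsub>G\<^esub> a i) {1..n} (rcosets\<^bsub>G\<^esub> (stab G H f))"
    and "(m * int n) mod int (card (distributor_subgroup G H f)) = 1 mod int (card (distributor_subgroup G H f))"
  shows "(\<lambda>x. f x \<otimes>\<^bsub>H\<^esub>
            (listprod H (map (\<lambda>i. distributor G H f (a i) x) [1..<Suc n])) [^]\<^bsub>H\<^esub> m)
         \<in> hom G H"
proof -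
  interpret distributed_average G H f a n
    by (intro distributed_average.intro identity_preserving_map.intro
        distributed_average_axioms.intro identity_preserving_map_axioms.intro) (use assms in auto)
  show ?thesis
    using distributed_average_hom[OF assms(12)] unfolding distributor_product_def .
qed

end
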